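(* Let $R=GR(4,m)$ with $m$ odd, $\mathcal{T}$ its Teichmüller set and $2R=\{2x:x\in R\}$. Counting ordered quadruples $(X,Y,Z,W)\in\mathcal{T}^4$: (a) the multiset $\{X+Y+Z+W\}$ contains $0$ with multiplicity $2^m$, each element of $2R\setminus\{0\}$ with multiplicity $2^m(2^m+1)$, and each element outside $2R$ with multiplicity $2^{2m}$; (b) the multiset $\{X+Y-Z-W\}$ contains $0$ with multiplicity $(2^{m+1}-1)2^m$, each element of $2R\setminus\{0\}$ with multiplicity $(2^m-1)2^m$, and each element outside $2R$ with multiplicity $2^{2m}$; (c) the multiset $\{X+Y+Z-W\}$ contains each element of $2R$ with multiplicity $2^{2m}$, each element of $(\mathcal{T}+\mathcal{T})\setminus 2R$ with multiplicity $(2^m+1)2^m$, and each element outside $\mathcal{T}+\mathcal{T}$ with multiplicity $(2^m-1)2^m$, where $\mathcal{T}+\mathcal{T}=\{X+Y:X,Y\in\mathcal{T}\}$ as a set.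
   Context: $R=GR(4,m)=\mathbb{Z}_4[x]/(f(x))$ with $f$ monic of degree $m$ irreducible mod 2. $\mathcal{T}=\{0,1,\beta,\dots,\beta^{2^m-2}\}$ where $\beta\in R^*$ has multiplicative order $2^m-1$ (Teichmüller set). *)

theory Defs
  imports "HOL-Library.Numeral_Type" "Berlekamp_Zassenhaus.Finite_Field"
    "HOL-Computational_Algebra.Polynomial"
begin

instance bit0 :: (finite) nontriv
  by intro_classes (simp add: Suc_lessI finite_UNIV_card_ge_0)

type_synonym z4 = "4 mod_ring"
type_synonym z2 = "bool mod_ring"

definition red2 :: "z4 \<Rightarrow> z2" where
  "red2 c = of_int (to_int_mod_ring c)"

text \<open>GR(4,m) = Z_4[x]/(f): elements represented by their canonical
  remainders modulo the monic polynomial f, i.e. polynomials of degree < deg f.\<close>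
definition gr_carrier :: "z4 poly \<Rightarrow> z4 poly set" where
  "gr_carrier f = {r. r = 0 \<or> degree r < degree f}"

definition gr_red :: "z4 poly \<Rightarrow> z4 poly \<Rightarrow> z4 poly" where
  "gr_red f p = (THE r. r \<in> gr_carrier f \<and> f dvd (p - r))"

text \<open>Multiplication and powers in GR(4,m) (addition is polynomial addition).\<close>
definition gr_mult :: "z4 poly \<Rightarrow> z4 poly \<Rightarrow> z4 poly \<Rightarrow> z4 poly" where
  "gr_mult f p q = gr_red f (p * q)"

definition gr_pow :: "z4 poly \<Rightarrow> z4 poly \<Rightarrow> nat \<Rightarrow> z4 poly" where
  "gr_pow f b k = gr_red f (b ^ k)"

definition gr_has_order :: "z4 poly \<Rightarrow> z4 poly \<Rightarrow> nat \<Rightarrow> bool" where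
  "gr_has_order f b n \<longleftrightarrow> b \<in> gr_carrier f \<and> gr_pow f b n = 1 \<and>
     (\<forall>k. 0 < k \<and> k < n \<longrightarrow> gr_pow f b k \<noteq> 1)"

definition teich :: "z4 poly \<Rightarrow> z4 poly \<Rightarrow> z4 poly set" where
  "teich f b = insert 0 ((\<lambda>k. gr_pow f b k) ` {..< 2 ^ degree f - 1})"

definition twoR :: "z4 poly \<Rightarrow> z4 poly set" where
  "twoR f = (\<lambda>x. gr_red f (2 * x)) ` gr_carrier f"

end

theory Submission
  imports Defs "Berlekamp_Zassenhaus.Distinct_Degree_Factorization"
begin

(*
  Reduction mod 2 maps the Teichmueller set T bijectively onto the field F = GF(2^m), and an
  element a of R = GR(4, m) is determined by the pair (mu a, nu a), where nu a is the reduction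
  of the second digit B of the 2-adic expansion a = A + 2 B with A, B in T.  These second digits
  add like Witt vectors, nu (a + b) = nu a + nu b + sqrt (mu a * mu b), so a relation
  X + Y + Z + W = a with X, Y, Z, W in T (and likewise with signs) becomes a linear equation
  x + y + z + w = mu a over F together with a quadratic one in the second elementary symmetric
  function of x, y, z, w.  Eliminating w and shifting x, y by z makes the quadratic equation
  linear in z, with coefficient mu a.  What remains are classical counts over F: linear
  equations, the quadratic form u^2 + u v + v^2 (anisotropic because F contains no primitive
  cube root of unity when m is odd), products (u + s) (v + s) and Artin-Schreier equations
  z^2 + s z = c.
*)

lemma dvd_power_diff: "(f::'a::comm_ring_1) dvd a - b \<Longrightarrow> f dvd a ^ n - b ^ n"
  by (simp add: power_diff_sumr2)

lemma power_diff_factor: "i \<le> j \<Longrightarrow> (b::'a::comm_ring_1) ^ j - b ^ i = b ^ i * (b ^ (j - i) - 1)"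
  by (simp add: right_diff_distrib flip: power_add)

lemma square_add_double:
  fixes a c :: "'a::comm_ring_1"
  assumes "(4::'a) = 0"
  shows "(a + 2 * c)\<^sup>2 = a\<^sup>2"
proof -
  have "(a + 2 * c)\<^sup>2 = a\<^sup>2 + 4 * (a * c + c * c)"
    by (simp add: power2_eq_square algebra_simps)
  then show ?thesis using assms by simp
qed

lemma power_two_pow_add:
  fixes a b :: "'a::comm_ring_1"
  assumes "(4::'a) = 0"
  shows "(a + b) ^ 2 ^ Suc k = a ^ 2 ^ Suc k + b ^ 2 ^ Suc k + 2 * (a * b) ^ 2 ^ k"
proof (induction k)
  case 0
  show ?case by (simp add: power2_eq_square algebra_simps)
next
  case (Suc k)
  have sq: "x ^ 2 ^ Suc (Suc k) = (x ^ 2 ^ Suc k)\<^sup>2" for x :: 'a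
    by (simp flip: power_mult add: mult.commute)
  have "(a + b) ^ 2 ^ Suc (Suc k) = (a ^ 2 ^ Suc k + b ^ 2 ^ Suc k + 2 * (a * b) ^ 2 ^ k)\<^sup>2"
    by (simp only: sq Suc.IH)
  also have "\<dots> = (a ^ 2 ^ Suc k + b ^ 2 ^ Suc k)\<^sup>2"
    by (rule square_add_double[OF assms])
  also have "\<dots> = (a ^ 2 ^ Suc k)\<^sup>2 + (b ^ 2 ^ Suc k)\<^sup>2 + 2 * (a * b) ^ 2 ^ Suc k"
    by (simp add: power2_eq_square algebra_simps power_mult_distrib)
  finally show ?case by (simp only: sq)
qed

lemma mod_add_mods: "(x + (a mod n + b mod n)) mod n = (x + (a + b)) mod n"
  for x a b n :: "'a::euclidean_semiring_cancel"
  by (metis mod_add_eq mod_add_right_eq)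

lemma sum_card_filter_swap:
  assumes "finite A" "finite B"
  shows "(\<Sum>a\<in>A. card {b \<in> B. R a b}) = (\<Sum>b\<in>B. card {a \<in> A. R a b})"
proof -
  have "card {b \<in> B. R a b} = (\<Sum>b\<in>B. if R a b then 1 else 0)" for a
    using assms(2) by (simp add: sum.inter_filter[symmetric])
  moreover have "card {a \<in> A. R a b} = (\<Sum>a\<in>A. if R a b then 1 else 0)" for b
    using assms(1) by (simp add: sum.inter_filter[symmetric])
  ultimately show ?thesis by (simp add: sum.swap[of _ A])
qed

lemma card_quadruples_bij_betw:
  assumes h: "bij_betw h A B"
    and PQ: "\<And>a b c d. a \<in> A \<Longrightarrow> b \<in> A \<Longrightarrow> c \<in> A \<Longrightarrow> d \<in> A \<Longrightarrow>
      P a b c d \<longleftrightarrow> Q (h a) (h b) (h c) (h d)"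
  shows "card {(a, b, c, d). a \<in> A \<and> b \<in> A \<and> c \<in> A \<and> d \<in> A \<and> P a b c d} =
    card {(x, y, z, w). x \<in> B \<and> y \<in> B \<and> z \<in> B \<and> w \<in> B \<and> Q x y z w}"
proof (rule bij_betw_same_card, rule bij_betw_byWitness)
  let ?h' = "inv_into A h"
  have h'B: "?h' x \<in> A" "h (?h' x) = x" if "x \<in> B" for x
    using that h bij_betw_inv_into_right[OF h] by (auto simp: bij_betw_def inv_into_into)
  have hA: "h a \<in> B" "?h' (h a) = a" if "a \<in> A" for a
    using that bij_betw_apply[OF h] bij_betw_inv_into_left[OF h] by auto
  show "\<forall>t\<in>{(a, b, c, d). a \<in> A \<and> b \<in> A \<and> c \<in> A \<and> d \<in> A \<and> P a b c d}.
      (\<lambda>(x, y, z, w). (?h' x, ?h' y, ?h' z, ?h' w)) ((\<lambda>(a, b, c, d). (h a, h b, h c, h d)) t) = t"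
    using hA by auto
  show "\<forall>s\<in>{(x, y, z, w). x \<in> B \<and> y \<in> B \<and> z \<in> B \<and> w \<in> B \<and> Q x y z w}.
      (\<lambda>(a, b, c, d). (h a, h b, h c, h d)) ((\<lambda>(x, y, z, w). (?h' x, ?h' y, ?h' z, ?h' w)) s) = s"
    using h'B by auto
  show "(\<lambda>(a, b, c, d). (h a, h b, h c, h d)) ` {(a, b, c, d). a \<in> A \<and> b \<in> A \<and> c \<in> A \<and> d \<in> A \<and> P a b c d}
      \<subseteq> {(x, y, z, w). x \<in> B \<and> y \<in> B \<and> z \<in> B \<and> w \<in> B \<and> Q x y z w}"
    using hA PQ by auto
  show "(\<lambda>(x, y, z, w). (?h' x, ?h' y, ?h' z, ?h' w)) `
      {(x, y, z, w). x \<in> B \<and> y \<in> B \<and> z \<in> B \<and> w \<in> B \<and> Q x y z w}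
      \<subseteq> {(a, b, c, d). a \<in> A \<and> b \<in> A \<and> c \<in> A \<and> d \<in> A \<and> P a b c d}"
    using h'B PQ by fastforce
qed

definition esym2 :: "'a::comm_semiring \<Rightarrow> 'a \<Rightarrow> 'a \<Rightarrow> 'a \<Rightarrow> 'a" where
  "esym2 x y z w = x * y + x * z + x * w + y * z + y * w + z * w"

lemma esym2_pairs: "esym2 x y z w = x * y + z * w + (x + y) * (z + w)"
  by (simp add: esym2_def algebra_simps)

section \<open>Reducing coefficients from \<open>\<int>/4\<close> to GF(2)\<close>

lemma to_int_z4[simp]: "to_int_mod_ring (0::z4) = 0" "to_int_mod_ring (1::z4) = 1"
   "to_int_mod_ring (2::z4) = 2" "to_int_mod_ring (3::z4) = 3"
  using to_int_mod_ring_of_int_mod_ring[where 'a=4, of 2]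
    to_int_mod_ring_of_int_mod_ring[where 'a=4, of 3]
  by (simp_all flip: of_int_of_int_mod_ring)

lemma z4_cases: "(c::z4) = 0 \<or> c = 1 \<or> c = 2 \<or> c = 3"
proof -
  have "(UNIV :: z4 set) = {0, 1, 2, 3}"
    by (rule sym, rule card_subset_eq) (simp_all add: card_insert_if to_int_mod_ring_hom.eq_iff[symmetric])
  then show ?thesis by auto
qed

lemma z2_numerals[simp]: "(2::z2) = 0" "(3::z2) = 1"
proof -
  show two: "(2::z2) = 0"
    using of_nat_card_eq_0[where 'a=bool] by simp
  have "(3::z2) = 2 + 1" by simp
  then show "(3::z2) = 1" by (simp only: two) simp
qed

lemma z4_numerals[simp]: "(4::z4) = 0" "(5::z4) = 1" "(6::z4) = 2" "(9::z4) = 1"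
proof -
  show four: "(4::z4) = 0"
    using of_nat_card_eq_0[where 'a=4] by simp
  have "(5::z4) = 4 + 1" "(6::z4) = 4 + 2" "(9::z4) = 4 + 4 + 1" by simp_all
  then show "(5::z4) = 1" "(6::z4) = 2" "(9::z4) = 1" by (simp_all only: four) simp_all
qed

lemma red2_z4[simp]: "red2 0 = 0" "red2 1 = 1" "red2 2 = 0" "red2 3 = 1"
  by (simp_all add: red2_def)

interpretation red2: comm_ring_hom red2
proof
  fix x y :: z4
  show "red2 (x + y) = red2 x + red2 y" "red2 (x * y) = red2 x * red2 y"
    using z4_cases[of x] z4_cases[of y] by auto
qed simp_all

interpretation red2_poly: map_poly_comm_ring_hom red2 ..

definition z4_half :: "z4 \<Rightarrow> z4" where
  "z4_half c = of_int (to_int_mod_ring c div 2)"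

lemma z4_two_neq_zero[simp]: "(2::z4) \<noteq> 0" "(0::z4) \<noteq> 2"
  using to_int_z4(1,3) by (metis zero_neq_numeral)+

lemma z4_half_0[simp]: "z4_half 0 = 0"
  by (simp add: z4_half_def)

lemma red2_double: "red2 (2 * c) = 0"
  and double_z4_half: "red2 c = 0 \<Longrightarrow> 2 * z4_half c = c"
  and double_eq_double_z4: "2 * c = 2 * d \<longleftrightarrow> red2 c = red2 d"
  using z4_cases[of c] z4_cases[of d] by (auto simp: z4_half_def)

abbreviation mu :: "z4 poly \<Rightarrow> z2 poly" where
  "mu \<equiv> map_poly red2"

lemma coeff_double: "coeff (2 * p) n = 2 * coeff p n"
  by (simp add: numeral_mult_conv_smult)

lemma mu_double[simp]: "mu (2 * p) = 0"
  by (simp add: poly_eq_iff coeff_map_poly coeff_double red2_double)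

lemma double_half_poly: "mu p = 0 \<Longrightarrow> 2 * map_poly z4_half p = p"
  by (auto simp: poly_eq_iff coeff_map_poly coeff_double double_z4_half)

lemma double_eq_double_iff: "2 * p = 2 * p' \<longleftrightarrow> mu p = mu p'"
  by (simp add: poly_eq_iff coeff_map_poly coeff_double double_eq_double_z4)

lemma z2_poly_two[simp]: "(2::z2 poly) = 0"
  by (simp add: numeral_poly)

lemma z2_poly_add_self[simp]: "(x::z2 poly) + x = 0"
  by (metis mult_2 z2_poly_two mult_zero_left)

lemma z2_poly_add_self_left[simp]: "(x::z2 poly) + (x + y) = y"
  by (metis add.assoc add_0 z2_poly_add_self)

lemma z2_poly_uminus[simp]: "- (x::z2 poly) = x"
  by (metis add_eq_0_iff z2_poly_add_self)

lemma mu_uminus[simp]: "mu (- p) = mu p"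
  by (simp add: red2_poly.hom_uminus)

lemma z2_poly_diff[simp]: "(a::z2 poly) - b = a + b"
  by (metis diff_conv_add_uminus z2_poly_uminus)

lemma z2_poly_frobenius: "((a::z2 poly) + b) ^ 2 ^ k = a ^ 2 ^ k + b ^ 2 ^ k"
  using add_power_prime_poly_mod_ring[of a b k] by simp

lemma z2_poly_square_add: "((a::z2 poly) + b)\<^sup>2 = a\<^sup>2 + b\<^sup>2"
  using z2_poly_frobenius[of a b 1] by simp

lemma z4_poly_four[simp]: "(4::z4 poly) = 0"
  by (simp add: numeral_poly)

lemma mu_eq_imp_power_eq:
  assumes "mu a = mu b" "0 < k"
  shows "a ^ 2 ^ k = b ^ 2 ^ k"
proof -
  have "mu (a - b) = 0" using assms(1) by (simp add: red2_poly.hom_minus)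
  then have "a = b + 2 * map_poly z4_half (a - b)"
    using double_half_poly by (metis add_diff_cancel_left' add_diff_eq diff_add_cancel)
  then have "a\<^sup>2 = b\<^sup>2"
    using square_add_double[OF z4_poly_four] by metis
  moreover have "x ^ 2 ^ k = (x\<^sup>2) ^ 2 ^ (k - 1)" for x :: "z4 poly"
    using assms(2) by (cases k) (simp_all flip: power_mult)
  ultimately show ?thesis by metis
qed

lemma esym2_shift:
  "esym2 (u + z) (v + z) z (s + u + v + z) = s * z + (u\<^sup>2 + u * v + v\<^sup>2 + s * (u + v))"
  and esym2_shift_zw:
  "esym2 (u + z) (v + z) z (s + u + v + z) + z\<^sup>2 + (s + u + v + z)\<^sup>2 = s * z + (u + s) * (v + s)"
  and esym2_shift_w:
  "esym2 (u + z) (v + z) z (s + u + v + z) + (s + u + v + z)\<^sup>2 = (u + s) * (v + s) + (z\<^sup>2 + s * z)"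
  for u v z s :: "z2 poly"
  by (simp_all add: esym2_def algebra_simps power2_eq_square)

section \<open>The field GF(2)[x]/(g)\<close>

locale gf2m =
  fixes g :: "z2 poly" and m :: nat
  assumes degree_g: "degree g = m" and irreducible_g: "irreducible g"
begin

abbreviation q :: nat where "q \<equiv> 2 ^ m"

text \<open>Elements of GF(2^m) are represented by their remainders modulo \<open>g\<close>; in characteristic 2 two
  polynomials represent the same element iff \<open>g\<close> divides their sum.\<close>

definition Fq :: "z2 poly set" where "Fq = {p. degree p < m}"

lemma g_nonzero: "g \<noteq> 0"
  using irreducible_g by auto

lemma m_pos: "0 < m"
proof (rule ccontr)
  assume "\<not> 0 < m"
  then have "is_unit g" using degree_g g_nonzero is_unit_iff_degree by auto
  then show False using irreducible_g irreducible_not_unit by blast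
qed

lemma q_ge_2: "2 \<le> q"
  using m_pos by (simp add: self_le_power)

lemma not_g_dvd_1: "\<not> g dvd 1"
  using irreducible_g irreducible_not_unit by blast

lemma g_dvd_mult_iff: "g dvd a * b \<longleftrightarrow> g dvd a \<or> g dvd b"
  by (rule prime_elem_dvd_mult_iff[OF irreducible_imp_prime_elem[OF irreducible_g]])

lemma g_dvd_square_iff: "g dvd a\<^sup>2 \<longleftrightarrow> g dvd a"
  by (simp add: power2_eq_square g_dvd_mult_iff)

lemma finite_Fq[simp]: "finite Fq" and card_Fq: "card Fq = q"
proof -
  interpret poly_mod_type_irr "CARD(bool)" g
    by (unfold_locales, auto simp add: irreducible_g)
  show "finite Fq" "card Fq = q"
    using finite_carrier_irr card_carrier_irr unfolding carrier_irr_def Fq_def degree_g by simp_all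
qed

lemma Fq_mod: "p \<in> Fq \<Longrightarrow> p mod g = p"
  unfolding Fq_def by (simp add: mod_poly_less degree_g)

lemma mod_in_Fq[simp]: "p mod g \<in> Fq"
  using m_pos degree_g g_nonzero degree_mod_less'[of g p] unfolding Fq_def
  by (cases "p mod g = 0") auto

lemma zero_in_Fq[simp]: "0 \<in> Fq"
  using m_pos by (simp add: Fq_def)

lemma add_in_Fq[simp]: "a \<in> Fq \<Longrightarrow> b \<in> Fq \<Longrightarrow> a + b \<in> Fq"
  unfolding Fq_def by (simp add: degree_add_less)

lemma mod_eq_iff: "a mod g = b mod g \<longleftrightarrow> g dvd a + b"
  by (simp add: mod_eq_dvd_iff)

lemma mod_eq_Fq_iff: "a \<in> Fq \<Longrightarrow> b mod g = a \<longleftrightarrow> g dvd a + b"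
  by (metis Fq_mod mod_eq_iff add.commute)

lemma Fq_eq_iff: "a \<in> Fq \<Longrightarrow> b \<in> Fq \<Longrightarrow> a = b \<longleftrightarrow> g dvd a + b"
  by (metis Fq_mod mod_eq_iff)

lemma Fq_eq_0_iff: "a \<in> Fq \<Longrightarrow> a = 0 \<longleftrightarrow> g dvd a"
  using Fq_eq_iff[of a 0] by simp

lemma g_dvd_mod_add: "g dvd x mod g + x"
  using mod_eq_iff[of "x mod g" x] by simp

lemma fermat: "g dvd x ^ q + x"
proof -
  interpret poly_mod_type_irr "CARD(bool)" g
    by (unfold_locales, auto simp add: irreducible_g)
  have "(x mod g) ^ q mod g = x mod g"
  proof (cases "x mod g = 0")
    case False
    then have "x mod g \<in> carrier (mult_of R)"
      using mod_in_carrier by (simp add: carrier_mult_of R_def)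
    from element_power_order_eq_1'[OF this] show ?thesis by (simp add: degree_g)
  qed (simp add: zero_power)
  then show ?thesis by (simp add: mod_eq_iff power_mod)
qed

definition inverse_mod :: "z2 poly \<Rightarrow> z2 poly" where
  "inverse_mod a = a ^ (q - 2) mod g"

lemma inverse_mod_in_Fq[simp]: "inverse_mod a \<in> Fq"
  unfolding inverse_mod_def by simp

lemma inverse_mod: assumes "\<not> g dvd a" shows "g dvd a * inverse_mod a + 1"
proof -
  have q: "q = Suc (Suc (q - 2))" using q_ge_2 by simp
  have "a ^ q + a = a * (a * a ^ (q - 2) + 1)"
    by (subst q) (simp add: algebra_simps)
  then have "g dvd a * a ^ (q - 2) + 1"
    using fermat[of a] assms g_dvd_mult_iff by metis
  moreover have "a * inverse_mod a + 1 = (a * a ^ (q - 2) + 1) + a * (inverse_mod a + a ^ (q - 2))"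
    by (simp add: algebra_simps)
  ultimately show ?thesis
    unfolding inverse_mod_def using g_dvd_mod_add by (metis dvd_add dvd_mult)
qed

lemma card_Fq_unique:
  assumes "z0 \<in> Fq" "P z0" "\<And>z. z \<in> Fq \<Longrightarrow> P z \<Longrightarrow> g dvd z + z0"
  shows "card {z \<in> Fq. P z} = 1"
proof -
  have "{z \<in> Fq. P z} = {z0}"
    using assms Fq_eq_iff by blast
  then show ?thesis by simp
qed

lemma card_linear:
  assumes "a \<in> Fq" "a \<noteq> 0"
  shows "card {z \<in> Fq. g dvd a * z + c} = 1"
proof (rule card_Fq_unique)
  have a: "\<not> g dvd a" using assms Fq_eq_0_iff by blast
  let ?z0 = "(inverse_mod a * c) mod g"
  show "?z0 \<in> Fq" by simp
  have "a * ?z0 + c = a * (?z0 + inverse_mod a * c) + (a * inverse_mod a + 1) * c"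
    by (simp add: algebra_simps)
  then show z0: "g dvd a * ?z0 + c"
    using g_dvd_mod_add inverse_mod[OF a] by (metis dvd_add dvd_mult dvd_mult2)
  fix z assume "z \<in> Fq" "g dvd a * z + c"
  moreover have "(a * z + c) + (a * ?z0 + c) = a * (z + ?z0)" by (simp add: algebra_simps)
  ultimately show "g dvd z + ?z0" using z0 a g_dvd_mult_iff by (metis dvd_add)
qed

lemma card_square_root: "card {z \<in> Fq. g dvd z\<^sup>2 + c} = 1"
proof (rule card_Fq_unique)
  let ?z0 = "c ^ 2 ^ (m - 1) mod g"
  show "?z0 \<in> Fq" by simp
  have sq: "(c ^ 2 ^ (m - 1))\<^sup>2 = c ^ q"
    using m_pos by (simp flip: power_mult power_Suc2)
  have "g dvd (?z0 + c ^ 2 ^ (m - 1))\<^sup>2"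
    using g_dvd_mod_add g_dvd_square_iff by blast
  then have "g dvd ?z0\<^sup>2 + c ^ q"
    by (simp only: z2_poly_square_add sq)
  moreover have "?z0\<^sup>2 + c = (?z0\<^sup>2 + c ^ q) + (c ^ q + c)"
    by (simp only: add.assoc z2_poly_add_self_left)
  ultimately show z0: "g dvd ?z0\<^sup>2 + c"
    using fermat[of c] by (simp only: dvd_add)
  fix z assume "z \<in> Fq" "g dvd z\<^sup>2 + c"
  moreover have "(z + ?z0)\<^sup>2 = (z\<^sup>2 + c) + (?z0\<^sup>2 + c)"
    by (simp add: z2_poly_square_add add.assoc add.left_commute)
  ultimately have "g dvd (z + ?z0)\<^sup>2"
    using z0 by (simp only: dvd_add)
  then show "g dvd z + ?z0" using g_dvd_square_iff by blast
qed

text \<open>\<open>x \<mapsto> x ^ 2 ^ (m - 1)\<close> inverts the Frobenius \<open>x \<mapsto> x\<^sup>2\<close>.\<close>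

lemma sqrt_mod_eq_iff:
  assumes "\<nu> \<in> Fq"
  shows "(p ^ 2 ^ (m - 1) + c) mod g = \<nu> \<longleftrightarrow> g dvd p + c\<^sup>2 + \<nu>\<^sup>2"
proof -
  have sq: "(p ^ 2 ^ (m - 1))\<^sup>2 = p ^ q"
    using m_pos by (cases m) (simp_all add: mult.commute flip: power_mult)
  have "(p ^ 2 ^ (m - 1) + c) mod g = \<nu> \<longleftrightarrow> g dvd (\<nu> + (p ^ 2 ^ (m - 1) + c))\<^sup>2"
    by (simp only: mod_eq_Fq_iff[OF assms] g_dvd_square_iff)
  also have "(\<nu> + (p ^ 2 ^ (m - 1) + c))\<^sup>2 = \<nu>\<^sup>2 + (p ^ q + c\<^sup>2)"
    by (simp only: z2_poly_square_add sq)
  also have "\<dots> = (p ^ q + p) + (p + c\<^sup>2 + \<nu>\<^sup>2)"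
    by (simp add: add.assoc add.commute add.left_commute)
  also have "g dvd (p ^ q + p) + (p + c\<^sup>2 + \<nu>\<^sup>2) \<longleftrightarrow> g dvd p + c\<^sup>2 + \<nu>\<^sup>2"
    using fermat by (rule dvd_add_right_iff)
  finally show ?thesis .
qed

lemma card_pairs_sum:
  "card {(u, v). u \<in> Fq \<and> v \<in> Fq \<and> P u v} = (\<Sum>u\<in>Fq. card {v \<in> Fq. P u v})"
proof -
  have "{(u, v). u \<in> Fq \<and> v \<in> Fq \<and> P u v} = Sigma Fq (\<lambda>u. {v \<in> Fq. P u v})"
    by auto
  then show ?thesis by (simp add: card_SigmaI)
qed

lemma card_product:
  assumes "a \<in> Fq" "b \<in> Fq"
  shows "card {(u, v). u \<in> Fq \<and> v \<in> Fq \<and> g dvd (u + a) * (v + b) + D} =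
    (if g dvd D then 2 * q - 1 else q - 1)"
proof -
  have linear: "card {v \<in> Fq. g dvd (u + a) * (v + b) + D} = 1" if "u \<in> Fq - {a}" for u
  proof -
    have "u + a \<in> Fq" "u + a \<noteq> 0"
      using that assms by (auto simp: add_eq_0_iff)
    moreover have "(u + a) * (v + b) + D = (u + a) * v + ((u + a) * b + D)" for v
      by (simp add: algebra_simps)
    ultimately show ?thesis using card_linear by presburger
  qed
  have "card {(u, v). u \<in> Fq \<and> v \<in> Fq \<and> g dvd (u + a) * (v + b) + D} =
      card {v \<in> Fq. g dvd D} + (\<Sum>u\<in>Fq - {a}. card {v \<in> Fq. g dvd (u + a) * (v + b) + D})"
    unfolding card_pairs_sum using assms by (simp add: sum.remove)
  also have "\<dots> = card {v \<in> Fq. g dvd D} + (q - 1)"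
    using linear assms by (simp add: card_Fq)
  finally show ?thesis using q_ge_2 by (simp add: card_Fq mult_2)
qed

text \<open>A root \<open>t\<close> would satisfy \<open>t ^ 2 ^ k = t + [k odd]\<close> for all \<open>k\<close>, contradicting
  \<open>t ^ 2 ^ m = t\<close> for odd \<open>m\<close>.\<close>

lemma no_primitive_cube_root:
  assumes "odd m"
  shows "\<not> g dvd t\<^sup>2 + t + 1"
proof
  assume root: "g dvd t\<^sup>2 + t + 1"
  define e :: "nat \<Rightarrow> z2 poly" where "e k = (if even k then 0 else 1)" for k
  have "g dvd t ^ 2 ^ k + t + e k" for k
  proof (induction k)
    case 0
    show ?case by (simp add: e_def)
  next
    case (Suc k)
    have "(t ^ 2 ^ k + t + e k)\<^sup>2 = t ^ 2 ^ Suc k + t\<^sup>2 + e k"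
      by (simp add: z2_poly_square_add e_def mult.commute flip: power_mult)
    then have "g dvd t ^ 2 ^ Suc k + t\<^sup>2 + e k"
      using Suc.IH g_dvd_square_iff by metis
    moreover have "t ^ 2 ^ Suc k + t + e (Suc k) = (t ^ 2 ^ Suc k + t\<^sup>2 + e k) + (t\<^sup>2 + t + 1)"
      by (simp add: e_def algebra_simps)
    ultimately show ?case using root by (simp only: dvd_add)
  qed
  from this[of m] have "g dvd t ^ q + t + 1"
    using assms by (simp add: e_def)
  moreover have "1 = (t ^ q + t + 1) + (t ^ q + t)"
    by (simp add: algebra_simps)
  ultimately have "g dvd 1"
    using fermat[of t] by (metis dvd_add)
  then show False using not_g_dvd_1 by contradiction
qed

lemma norm_form_scaled:
  assumes "g dvd t * v + u"
  shows "g dvd u\<^sup>2 + u * v + v\<^sup>2 + v\<^sup>2 * (t\<^sup>2 + t + 1)"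
proof -
  have "u\<^sup>2 + u * v + v\<^sup>2 + v\<^sup>2 * (t\<^sup>2 + t + 1) = (t * v + u) * (t * v + u + v)"
    by (simp add: algebra_simps power2_eq_square)
  then show ?thesis using assms by simp
qed

definition fq_div :: "z2 poly \<Rightarrow> z2 poly \<Rightarrow> z2 poly" where
  "fq_div u v = (u * inverse_mod v) mod g"

lemma fq_div_in_Fq[simp]: "fq_div u v \<in> Fq"
  by (simp add: fq_div_def)

lemma fq_div:
  assumes "v \<in> Fq" "v \<noteq> 0"
  shows "g dvd fq_div u v * v + u"
proof -
  have "fq_div u v * v + u = (fq_div u v + u * inverse_mod v) * v + u * (v * inverse_mod v + 1)"
    by (simp add: algebra_simps)
  moreover have "g dvd v * inverse_mod v + 1"
    using inverse_mod assms Fq_eq_0_iff by blast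
  ultimately show ?thesis
    unfolding fq_div_def using g_dvd_mod_add by (metis dvd_add dvd_mult dvd_mult2)
qed

definition norm_form_points :: "z2 poly \<Rightarrow> (z2 poly \<times> z2 poly) set" where
  "norm_form_points D = {(u, v). u \<in> Fq \<and> v \<in> Fq \<and> v \<noteq> 0 \<and> g dvd u\<^sup>2 + u * v + v\<^sup>2 + D}"

lemma norm_form_points_scaled:
  assumes "(u, v) \<in> norm_form_points D"
  shows "g dvd v\<^sup>2 * ((fq_div u v)\<^sup>2 + fq_div u v + 1) + D"
proof -
  have "v \<in> Fq" "v \<noteq> 0" and uv: "g dvd u\<^sup>2 + u * v + v\<^sup>2 + D"
    using assms by (auto simp: norm_form_points_def)
  then have "g dvd u\<^sup>2 + u * v + v\<^sup>2 + v\<^sup>2 * ((fq_div u v)\<^sup>2 + fq_div u v + 1)"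
    using norm_form_scaled fq_div by blast
  moreover have "v\<^sup>2 * ((fq_div u v)\<^sup>2 + fq_div u v + 1) + D =
      (u\<^sup>2 + u * v + v\<^sup>2 + v\<^sup>2 * ((fq_div u v)\<^sup>2 + fq_div u v + 1)) + (u\<^sup>2 + u * v + v\<^sup>2 + D)"
    by (simp add: algebra_simps)
  ultimately show ?thesis using uv by (simp only: dvd_add)
qed

lemma norm_form_points_empty:
  assumes "odd m" "g dvd D"
  shows "norm_form_points D = {}"
proof (rule equals0I)
  fix p assume p: "p \<in> norm_form_points D"
  obtain u v where [simp]: "p = (u, v)" by fastforce
  have "v \<in> Fq" "v \<noteq> 0" using p by (auto simp: norm_form_points_def)
  have "g dvd v\<^sup>2 * ((fq_div u v)\<^sup>2 + fq_div u v + 1) + D"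
    using norm_form_points_scaled p by simp
  then have "g dvd v\<^sup>2 * ((fq_div u v)\<^sup>2 + fq_div u v + 1)"
    using dvd_add_left_iff[OF assms(2)] by blast
  then show False
    using no_primitive_cube_root[OF assms(1)] g_dvd_mult_iff g_dvd_square_iff
      \<open>v \<in> Fq\<close> \<open>v \<noteq> 0\<close> Fq_eq_0_iff by blast
qed

text \<open>For \<open>v \<noteq> 0\<close>, \<open>u\<^sup>2 + u v + v\<^sup>2 = v\<^sup>2 (t\<^sup>2 + t + 1)\<close> with \<open>t = u / v\<close>, and \<open>t\<^sup>2 + t + 1 \<noteq> 0\<close>:
  the quotient \<open>t\<close> determines \<open>v\<close> (as a square root) and hence \<open>u\<close>.\<close>

lemma inj_on_fq_div_norm_form_points:
  assumes "odd m"
  shows "inj_on (\<lambda>(u, v). fq_div u v) (norm_form_points D)"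
proof (rule inj_onI, clarify)
  fix u v u' v'
  assume uv: "(u, v) \<in> norm_form_points D" "(u', v') \<in> norm_form_points D"
    and eq: "fq_div u v = fq_div u' v'"
  let ?r = "(fq_div u v)\<^sup>2 + fq_div u v + 1"
  have "(v + v')\<^sup>2 * ?r = (v\<^sup>2 * ?r + D) + (v'\<^sup>2 * ?r + D)"
    by (simp add: z2_poly_square_add algebra_simps)
  then have "g dvd (v + v')\<^sup>2 * ?r"
    using norm_form_points_scaled[OF uv(1)] norm_form_points_scaled[OF uv(2)] eq by (metis dvd_add)
  then have "g dvd v + v'"
    using no_primitive_cube_root[OF assms] g_dvd_mult_iff g_dvd_square_iff by blast
  then have v: "v = v'"
    using uv Fq_eq_iff by (auto simp: norm_form_points_def)
  have "g dvd fq_div u v * v + u" "g dvd fq_div u' v' * v' + u'"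
    using fq_div uv by (auto simp: norm_form_points_def)
  moreover have "u + u' = (fq_div u v * v + u) + (fq_div u' v' * v' + u')"
    using eq v by (simp add: algebra_simps)
  ultimately have "g dvd u + u'"
    by (simp only: dvd_add)
  then show "u = u' \<and> v = v'"
    using uv Fq_eq_iff v by (auto simp: norm_form_points_def)
qed

lemma fq_div_norm_form_points_onto:
  assumes "odd m" "\<not> g dvd D" "t \<in> Fq"
  shows "t \<in> (\<lambda>(u, v). fq_div u v) ` norm_form_points D"
proof -
  define r where "r = t\<^sup>2 + t + 1"
  have r: "\<not> g dvd r" unfolding r_def by (rule no_primitive_cube_root[OF assms(1)])
  have rinv: "g dvd r * inverse_mod r + 1" using inverse_mod[OF r] .
  obtain v where "{z \<in> Fq. g dvd z\<^sup>2 + D * inverse_mod r} = {v}"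
    using card_square_root by (rule card_1_singletonE)
  then have v: "v \<in> Fq" "g dvd v\<^sup>2 + D * inverse_mod r" by auto
  have "v \<noteq> 0"
  proof
    assume "v = 0"
    then have "g dvd inverse_mod r" using v assms(2) g_dvd_mult_iff by simp
    then show False using rinv not_g_dvd_1 by (metis dvd_add_right_iff dvd_mult)
  qed
  define u where "u = (t * v) mod g"
  have tvu: "g dvd t * v + u"
    unfolding u_def using g_dvd_mod_add by (metis add.commute)
  have "u\<^sup>2 + u * v + v\<^sup>2 + D = (u\<^sup>2 + u * v + v\<^sup>2 + v\<^sup>2 * r) + r * (v\<^sup>2 + D * inverse_mod r)
      + D * (r * inverse_mod r + 1)"
    by (simp add: algebra_simps power2_eq_square)
  then have "g dvd u\<^sup>2 + u * v + v\<^sup>2 + D"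
    using norm_form_scaled[OF tvu] v(2) rinv unfolding r_def by (metis dvd_add dvd_mult)
  then have uv: "(u, v) \<in> norm_form_points D"
    using v \<open>v \<noteq> 0\<close> by (simp add: norm_form_points_def u_def)
  have "t + u * inverse_mod v = (t * v + u) * inverse_mod v + t * (v * inverse_mod v + 1)"
    by (simp add: algebra_simps)
  then have "g dvd t + u * inverse_mod v"
    using tvu inverse_mod[of v] v \<open>v \<noteq> 0\<close> Fq_eq_0_iff by (metis dvd_add dvd_mult dvd_mult2)
  then have "fq_div u v = t"
    using mod_eq_Fq_iff[OF assms(3)] by (simp add: fq_div_def)
  then show ?thesis using uv by force
qed

lemma card_norm_form_points:
  assumes "odd m"
  shows "card (norm_form_points D) = (if g dvd D then 0 else q)"
proof (cases "g dvd D")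
  case False
  have "(\<lambda>(u, v). fq_div u v) ` norm_form_points D = Fq"
    using fq_div_norm_form_points_onto[OF assms False] by auto
  then have "bij_betw (\<lambda>(u, v). fq_div u v) (norm_form_points D) Fq"
    using inj_on_fq_div_norm_form_points[OF assms] by (simp add: bij_betw_def)
  then show ?thesis using False card_Fq by (simp add: bij_betw_same_card)
qed (simp add: norm_form_points_empty[OF assms])

lemma card_norm_form:
  assumes "odd m"
  shows "card {(u, v). u \<in> Fq \<and> v \<in> Fq \<and> g dvd u\<^sup>2 + u * v + v\<^sup>2 + D} =
    (if g dvd D then 1 else q + 1)"
proof -
  define A where "A = {(u, v). u \<in> Fq \<and> v \<in> Fq \<and> v = 0 \<and> g dvd u\<^sup>2 + u * v + v\<^sup>2 + D}"
  have "{(u, v). u \<in> Fq \<and> v \<in> Fq \<and> g dvd u\<^sup>2 + u * v + v\<^sup>2 + D} = A \<union> norm_form_points D"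
    "A \<inter> norm_form_points D = {}"
    by (auto simp: A_def norm_form_points_def)
  moreover have "finite A" "finite (norm_form_points D)"
    by (auto simp: A_def norm_form_points_def intro: finite_subset[of _ "Fq \<times> Fq"])
  moreover have "A = (\<lambda>u. (u, 0)) ` {u \<in> Fq. g dvd u\<^sup>2 + D}"
    by (auto simp: A_def)
  then have "card A = 1"
    using card_square_root[of D] by (simp add: card_image inj_on_def)
  ultimately show ?thesis
    using card_norm_form_points[OF assms] by (simp add: card_Un_disjoint)
qed

lemma card_artin_schreier:
  assumes "a \<in> Fq" "a \<noteq> 0"
  shows "card {z \<in> Fq. g dvd z\<^sup>2 + a * z + D} = (if \<exists>z\<in>Fq. g dvd z\<^sup>2 + a * z + D then 2 else 0)"
proof (cases "\<exists>z\<in>Fq. g dvd z\<^sup>2 + a * z + D")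
  case True
  then obtain z0 where z0: "z0 \<in> Fq" "g dvd z0\<^sup>2 + a * z0 + D" by blast
  have "(z0 + a)\<^sup>2 + a * (z0 + a) + D = z0\<^sup>2 + a * z0 + D"
    by (simp add: algebra_simps power2_eq_square)
  then have z1: "z0 + a \<in> Fq" "g dvd (z0 + a)\<^sup>2 + a * (z0 + a) + D"
    using z0 assms(1) by simp_all
  have "{z \<in> Fq. g dvd z\<^sup>2 + a * z + D} = {z0, z0 + a}"
  proof (rule Set.set_eqI, rule iffI)
    fix z assume "z \<in> {z \<in> Fq. g dvd z\<^sup>2 + a * z + D}"
    then have z: "z \<in> Fq" "g dvd z\<^sup>2 + a * z + D" by auto
    have "(z + z0) * (z + (z0 + a)) = (z\<^sup>2 + a * z + D) + (z0\<^sup>2 + a * z0 + D)"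
      by (simp add: algebra_simps power2_eq_square)
    then have "g dvd (z + z0) * (z + (z0 + a))"
      using z(2) z0(2) by (simp only: dvd_add)
    then show "z \<in> {z0, z0 + a}"
      using g_dvd_mult_iff Fq_eq_iff z(1) z0(1) z1(1) by blast
  qed (use z0 z1 in auto)
  moreover have "z0 \<noteq> z0 + a" using assms(2) by simp
  ultimately show ?thesis using True by simp
qed simp

definition sum_quadruples ::
    "z2 poly \<Rightarrow> (z2 poly \<Rightarrow> z2 poly \<Rightarrow> z2 poly \<Rightarrow> z2 poly \<Rightarrow> bool) \<Rightarrow> (z2 poly \<times> z2 poly \<times> z2 poly \<times> z2 poly) set"
  where "sum_quadruples s P =
    {(x, y, z, w). x \<in> Fq \<and> y \<in> Fq \<and> z \<in> Fq \<and> w \<in> Fq \<and> x + y + z + w = s \<and> P x y z w}"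

text \<open>The substitution \<open>x = u + z, y = v + z, w = s + u + v + z\<close>; by \<open>esym2_shift\<close> the
  second elementary symmetric function becomes linear in \<open>z\<close> in these coordinates.\<close>

lemma card_sum_quadruples:
  assumes "s \<in> Fq"
  shows "card (sum_quadruples s P) =
    (\<Sum>(u, v)\<in>Fq \<times> Fq. card {z \<in> Fq. P (u + z) (v + z) z (s + u + v + z)})"
proof -
  define A where "A = Sigma (Fq \<times> Fq) (\<lambda>(u, v). {z \<in> Fq. P (u + z) (v + z) z (s + u + v + z)})"
  have sum: "(u + z) + (v + z) + z + (s + u + v + z) = s" for u v z :: "z2 poly"
    by (simp add: algebra_simps)
  have coords: "(x + z) + z = x" "s + (x + z) + (y + z) + z = w" if "x + y + z + w = s" for x y z w :: "z2 poly"
    using that by (auto simp: algebra_simps)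
  have "bij_betw (\<lambda>((u, v), z). (u + z, v + z, z, s + u + v + z)) A (sum_quadruples s P)"
  proof (rule bij_betw_byWitness[where f' = "\<lambda>(x, y, z, w). ((x + z, y + z), z)"])
    show "\<forall>a\<in>A. (\<lambda>(x, y, z, w). ((x + z, y + z), z)) ((\<lambda>((u, v), z). (u + z, v + z, z, s + u + v + z)) a) = a"
      by (auto simp: A_def add.assoc)
    show "\<forall>a\<in>sum_quadruples s P. (\<lambda>((u, v), z). (u + z, v + z, z, s + u + v + z)) ((\<lambda>(x, y, z, w). ((x + z, y + z), z)) a) = a"
      using coords by (auto simp: sum_quadruples_def)
    show "(\<lambda>((u, v), z). (u + z, v + z, z, s + u + v + z)) ` A \<subseteq> sum_quadruples s P"
      using assms sum by (auto simp: A_def sum_quadruples_def)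
    show "(\<lambda>(x, y, z, w). ((x + z, y + z), z)) ` sum_quadruples s P \<subseteq> A"
      using coords by (auto simp: A_def sum_quadruples_def)
  qed
  then have "card (sum_quadruples s P) = card A"
    by (simp add: bij_betw_same_card)
  also have "\<dots> = (\<Sum>(u, v)\<in>Fq \<times> Fq. card {z \<in> Fq. P (u + z) (v + z) z (s + u + v + z)})"
    unfolding A_def by (subst card_SigmaI) (auto simp: case_prod_beta)
  finally show ?thesis .
qed

lemma card_sum_quadruples_linear:
  assumes "s \<in> Fq" and linear: "\<And>u v z. P (u + z) (v + z) z (s + u + v + z) \<longleftrightarrow> g dvd s * z + c u v"
  shows "card (sum_quadruples s P) =
    (if s = 0 then q * card {(u, v). u \<in> Fq \<and> v \<in> Fq \<and> g dvd c u v} else q\<^sup>2)"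
proof -
  have "card (sum_quadruples s P) = (\<Sum>(u, v)\<in>Fq \<times> Fq. card {z \<in> Fq. g dvd s * z + c u v})"
    unfolding card_sum_quadruples[OF assms(1)] linear ..
  also have "\<dots> = (if s = 0 then q * card {(u, v). u \<in> Fq \<and> v \<in> Fq \<and> g dvd c u v} else q\<^sup>2)"
  proof (cases "s = 0")
    case True
    have "(\<Sum>(u, v)\<in>Fq \<times> Fq. card {z \<in> Fq. g dvd s * z + c u v}) =
        (\<Sum>p\<in>Fq \<times> Fq. if g dvd c (fst p) (snd p) then q else 0)"
      using True by (intro sum.cong) (auto simp: card_Fq)
    also have "\<dots> = q * card {p \<in> Fq \<times> Fq. g dvd c (fst p) (snd p)}"
      by (simp add: sum.inter_filter[symmetric])
    also have "{p \<in> Fq \<times> Fq. g dvd c (fst p) (snd p)} = {(u, v). u \<in> Fq \<and> v \<in> Fq \<and> g dvd c u v}"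
      by auto
    finally show ?thesis using True by simp
  next
    case False
    then have "(\<Sum>(u, v)\<in>Fq \<times> Fq. card {z \<in> Fq. g dvd s * z + c u v}) = card (Fq \<times> Fq)"
      using card_linear[OF assms(1)] by simp
    then show ?thesis using False by (simp add: card_cartesian_product card_Fq power2_eq_square)
  qed
  finally show ?thesis .
qed

lemma card_sum_quadruples_by_z:
  assumes "s \<in> Fq"
  shows "card (sum_quadruples s P) =
    (\<Sum>z\<in>Fq. card {(u, v). u \<in> Fq \<and> v \<in> Fq \<and> P (u + z) (v + z) z (s + u + v + z)})"
proof -
  have "card (sum_quadruples s P) =
      (\<Sum>p\<in>Fq \<times> Fq. card {z \<in> Fq. P (fst p + z) (snd p + z) z (s + fst p + snd p + z)})"
    unfolding card_sum_quadruples[OF assms] by (simp add: case_prod_beta)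
  also have "\<dots> = (\<Sum>z\<in>Fq. card {p \<in> Fq \<times> Fq. P (fst p + z) (snd p + z) z (s + fst p + snd p + z)})"
    by (rule sum_card_filter_swap) simp_all
  also have "\<dots> = (\<Sum>z\<in>Fq. card {(u, v). u \<in> Fq \<and> v \<in> Fq \<and> P (u + z) (v + z) z (s + u + v + z)})"
    by (intro sum.cong arg_cong[where f = card]) auto
  finally show ?thesis .
qed

lemma card_sum_quadruples_esym2:
  assumes "odd m" "s \<in> Fq"
  shows "card (sum_quadruples s (\<lambda>x y z w. g dvd esym2 x y z w + D)) =
    (if s = 0 then if g dvd D then q else q * (q + 1) else q\<^sup>2)"
proof -
  have "card (sum_quadruples s (\<lambda>x y z w. g dvd esym2 x y z w + D)) = (if s = 0
      then q * card {(u, v). u \<in> Fq \<and> v \<in> Fq \<and> g dvd u\<^sup>2 + u * v + v\<^sup>2 + s * (u + v) + D}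
      else q\<^sup>2)"
    by (rule card_sum_quadruples_linear[OF assms(2)]) (unfold esym2_shift, simp add: add.assoc)
  then show ?thesis using card_norm_form[OF assms(1), of D] by simp
qed

lemma card_sum_quadruples_esym2_zw:
  assumes "s \<in> Fq"
  shows "card (sum_quadruples s (\<lambda>x y z w. g dvd esym2 x y z w + z\<^sup>2 + w\<^sup>2 + D)) =
    (if s = 0 then if g dvd D then q * (2 * q - 1) else q * (q - 1) else q\<^sup>2)"
proof -
  have "card (sum_quadruples s (\<lambda>x y z w. g dvd esym2 x y z w + z\<^sup>2 + w\<^sup>2 + D)) = (if s = 0
      then q * card {(u, v). u \<in> Fq \<and> v \<in> Fq \<and> g dvd (u + s) * (v + s) + D} else q\<^sup>2)"
    by (rule card_sum_quadruples_linear[OF assms]) (unfold esym2_shift_zw, simp add: add.assoc)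
  then show ?thesis using card_product[of 0 0 D] by simp
qed

lemma card_sum_quadruples_esym2_w:
  assumes "s \<in> Fq"
  shows "card (sum_quadruples s (\<lambda>x y z w. g dvd esym2 x y z w + w\<^sup>2 + D)) =
    (if s = 0 then q\<^sup>2 else if \<exists>z\<in>Fq. g dvd z\<^sup>2 + s * z + D then q * (q + 1) else q * (q - 1))"
proof -
  have "card (sum_quadruples s (\<lambda>x y z w. g dvd esym2 x y z w + w\<^sup>2 + D)) =
      (\<Sum>z\<in>Fq. card {(u, v). u \<in> Fq \<and> v \<in> Fq \<and> g dvd (u + s) * (v + s) + (z\<^sup>2 + s * z + D)})"
    unfolding card_sum_quadruples_by_z[OF assms] esym2_shift_w by (simp add: add.assoc)
  also have "\<dots> = (\<Sum>z\<in>Fq. (q - 1) + (if g dvd z\<^sup>2 + s * z + D then q else 0))"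
    using assms q_ge_2 by (intro sum.cong) (simp_all add: card_product mult_2)
  also have "\<dots> = q * (q - 1) + q * card {z \<in> Fq. g dvd z\<^sup>2 + s * z + D}"
    by (simp only: sum.distrib sum_constant card_Fq) (simp add: sum.inter_filter[symmetric] mult.commute)
  finally have count: "card (sum_quadruples s (\<lambda>x y z w. g dvd esym2 x y z w + w\<^sup>2 + D)) =
      q * (q - 1) + q * card {z \<in> Fq. g dvd z\<^sup>2 + s * z + D}" .
  show ?thesis
  proof (cases "s = 0")
    case True
    then show ?thesis
      using count card_square_root[of D] q_ge_2 by (simp add: power2_eq_square algebra_simps)
  next
    case False
    then show ?thesis
      using count card_artin_schreier[OF assms False, of D] q_ge_2 by (simp add: algebra_simps)
  qed
qed

end

section \<open>The Galois ring \<open>\<int>/4[x]/(f)\<close> and its Teichmueller set\<close>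

locale gr_remainders =
  fixes f :: "z4 poly"
  assumes monic: "lead_coeff f = 1" and degree_pos: "0 < degree f"
begin

abbreviation R :: "z4 poly set" where "R \<equiv> gr_carrier f"

lemma mem_R_iff: "p \<in> R \<longleftrightarrow> degree p < degree f"
  using degree_pos unfolding gr_carrier_def by auto

lemma R_eq_iff: assumes "a \<in> R" "b \<in> R" shows "a = b \<longleftrightarrow> f dvd a - b"
proof
  assume "f dvd a - b"
  then obtain k where k: "a - b = f * k" by (elim dvdE)
  have "degree (a - b) < degree f"
    using assms by (simp add: mem_R_iff degree_diff_less)
  then have "k = 0"
    using degree_monic_mult[OF monic, of k] k by (cases "k = 0") auto
  then show "a = b" using k by simp
qed simp

lemma ex_remainder: "\<exists>r\<in>R. f dvd p - r"
proof -
  obtain d r where div: "pseudo_divmod p f = (d, r)" by fastforce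
  have "f \<noteq> 0" using degree_pos by auto
  then have "p = f * d + r" "r = 0 \<or> degree r < degree f"
    using pseudo_divmod[OF _ div] monic by simp_all
  then show ?thesis unfolding gr_carrier_def by auto
qed

lemma remainder_unique:
  assumes "r \<in> R" "r' \<in> R" "f dvd p - r" "f dvd p - r'"
  shows "r = r'"
proof -
  have "r - r' = (p - r') - (p - r)" by simp
  then have "f dvd r - r'" using assms(3,4) by (metis dvd_diff)
  then show ?thesis using R_eq_iff assms(1,2) by blast
qed

lemma gr_red: "gr_red f p \<in> R" "f dvd p - gr_red f p"
proof -
  have "\<exists>!r. r \<in> R \<and> f dvd p - r"
    using ex_remainder remainder_unique by blast
  from theI'[OF this] show "gr_red f p \<in> R" "f dvd p - gr_red f p"
    unfolding gr_red_def by auto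
qed

lemma gr_red_unique: "r \<in> R \<Longrightarrow> f dvd p - r \<Longrightarrow> gr_red f p = r"
  using gr_red remainder_unique by blast

lemma gr_red_eq_iff: "gr_red f p = gr_red f p' \<longleftrightarrow> f dvd p - p'"
proof
  assume "gr_red f p = gr_red f p'"
  then show "f dvd p - p'"
    using dvd_diff[OF gr_red(2)[of p] gr_red(2)[of p']] by (simp add: algebra_simps)
next
  assume "f dvd p - p'"
  then have "f dvd p - gr_red f p'"
    using dvd_add[OF _ gr_red(2)[of p']] by fastforce
  then show "gr_red f p = gr_red f p'"
    using gr_red_unique gr_red(1) by blast
qed

lemma gr_red_id: "r \<in> R \<Longrightarrow> gr_red f r = r"
  by (rule gr_red_unique) auto

lemma zero_in_R[simp]: "0 \<in> R" and one_in_R[simp]: "1 \<in> R"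
  using degree_pos by (auto simp: mem_R_iff)

lemma add_in_R[simp]: "a \<in> R \<Longrightarrow> b \<in> R \<Longrightarrow> a + b \<in> R"
  by (simp add: mem_R_iff degree_add_less)

lemma uminus_in_R[simp]: "a \<in> R \<Longrightarrow> - a \<in> R"
  by (simp add: mem_R_iff)

lemma diff_in_R[simp]: "a \<in> R \<Longrightarrow> b \<in> R \<Longrightarrow> a - b \<in> R"
  by (metis add_in_R uminus_in_R diff_conv_add_uminus)

lemma double_in_R[simp]: "a \<in> R \<Longrightarrow> 2 * a \<in> R"
  by (metis add_in_R mult_2)

lemma mu_f_nonzero: "mu f \<noteq> 0"
proof
  assume "mu f = 0"
  then have "coeff (mu f) (degree f) = 0" by simp
  then show False using monic by (simp add: coeff_map_poly)
qed

lemma double_dvd_imp_mu_dvd: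
  assumes "f dvd 2 * x"
  shows "mu f dvd mu x"
proof -
  obtain k where k: "2 * x = f * k" using assms by (elim dvdE)
  then have "mu f * mu k = 0" using mu_double[of x] by (simp add: red2_poly.hom_mult)
  then have "mu k = 0" using mu_f_nonzero by simp
  then have "2 * x = 2 * (f * map_poly z4_half k)"
    using k double_half_poly[of k] by (metis mult.left_commute)
  then have "mu x = mu f * mu (map_poly z4_half k)"
    by (simp add: double_eq_double_iff red2_poly.hom_mult)
  then show ?thesis by simp
qed

end

locale teichmueller = gr_remainders f for f +
  fixes \<beta> :: "z4 poly" and m :: nat
  assumes degree_f: "degree f = m"
    and irreducible_mu_f: "irreducible (mu f)"
    and order_beta: "gr_has_order f \<beta> (2 ^ m - 1)"
begin

abbreviation T :: "z4 poly set" where "T \<equiv> teich f \<beta>"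

lemma degree_mu_f: "degree (mu f) = m"
proof -
  have "red2 (lead_coeff f) = 0 \<longleftrightarrow> f = 0" using monic by auto
  then show ?thesis using Ring_Hom_Poly.degree_map_poly[of red2 f] degree_f by simp
qed

sublocale F: gf2m "mu f" m
  by unfold_locales (simp_all add: degree_mu_f irreducible_mu_f)

lemma mu_in_Fq: "p \<in> R \<Longrightarrow> mu p \<in> F.Fq"
  unfolding F.Fq_def mem_R_iff degree_f using degree_map_poly_le le_less_trans by blast

lemma mu_dvd: "f dvd a - b \<Longrightarrow> mu f dvd mu a + mu b"
  using red2_poly.hom_dvd[of f "a - b"] by (simp add: red2_poly.hom_minus)

lemma f_dvd_beta_order: "f dvd \<beta> ^ (2 ^ m - 1) - 1"
  using order_beta gr_red(2)[of "\<beta> ^ (2 ^ m - 1)"] by (simp add: gr_has_order_def gr_pow_def)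

lemma f_dvd_cancel_beta_power:
  assumes "f dvd \<beta> ^ k * x"
  shows "f dvd x"
proof -
  define N :: nat where "N = 2 ^ m - 1"
  have "N = Suc (N - 1)" using F.q_ge_2 by (simp add: N_def)
  then have "(\<beta> ^ N) ^ k * x = (\<beta> ^ (N - 1)) ^ k * (\<beta> ^ k * x)"
    by (metis mult.assoc power_Suc2 power_mult_distrib)
  then have "f dvd (\<beta> ^ N) ^ k * x" using assms by simp
  moreover have "f dvd ((\<beta> ^ N) ^ k - 1 ^ k) * x"
    using dvd_power_diff f_dvd_beta_order unfolding N_def by (metis dvd_mult2)
  ultimately have "f dvd (\<beta> ^ N) ^ k * x - ((\<beta> ^ N) ^ k - 1 ^ k) * x"
    by (rule dvd_diff)
  then show ?thesis by (simp add: algebra_simps)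
qed

lemma teich_eq: "T = insert 0 ((\<lambda>k. gr_red f (\<beta> ^ k)) ` {..<2 ^ m - 1})"
  unfolding teich_def gr_pow_def degree_f ..

lemma teich_in_R: "X \<in> T \<Longrightarrow> X \<in> R"
  unfolding teich_eq using gr_red(1) by auto

lemma zero_in_teich[simp]: "0 \<in> T"
  unfolding teich_eq by simp

lemma teich_frobenius:
  assumes "X \<in> T"
  shows "f dvd X ^ 2 ^ m - X"
proof (cases "X = 0")
  case False
  define N :: nat where "N = 2 ^ m - 1"
  obtain k where X: "X = gr_red f (\<beta> ^ k)"
    using assms False unfolding teich_eq by auto
  have "f dvd \<beta> ^ k - X" unfolding X by (rule gr_red(2))
  then have "f dvd (\<beta> ^ k) ^ 2 ^ m - X ^ 2 ^ m" by (rule dvd_power_diff)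
  moreover have "f dvd \<beta> ^ k * ((\<beta> ^ N) ^ k - 1 ^ k)"
    using dvd_power_diff f_dvd_beta_order unfolding N_def by (metis dvd_mult)
  moreover have "k * 2 ^ m = k + N * k"
    using F.q_ge_2 by (simp add: N_def algebra_simps)
  then have "(\<beta> ^ k) ^ 2 ^ m = \<beta> ^ k * (\<beta> ^ N) ^ k"
    by (simp flip: power_mult power_add)
  ultimately have "f dvd ((\<beta> ^ k) ^ 2 ^ m - X ^ 2 ^ m) - \<beta> ^ k * ((\<beta> ^ N) ^ k - 1 ^ k)"
    by (simp only: dvd_diff)
  then have "f dvd \<beta> ^ k - X ^ 2 ^ m"
    by (simp add: \<open>(\<beta> ^ k) ^ 2 ^ m = \<beta> ^ k * (\<beta> ^ N) ^ k\<close> algebra_simps)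
  then show ?thesis
    using \<open>f dvd \<beta> ^ k - X\<close> dvd_diff[of f "\<beta> ^ k - X" "\<beta> ^ k - X ^ 2 ^ m"] by simp
qed (simp add: zero_power)

lemma inj_on_beta_powers: "inj_on (\<lambda>k. gr_red f (\<beta> ^ k)) {..<2 ^ m - 1}"
proof (rule linorder_inj_onI')
  fix i j :: nat assume "i \<in> {..<2 ^ m - 1}" "j \<in> {..<2 ^ m - 1}" "i < j"
  show "gr_red f (\<beta> ^ i) \<noteq> gr_red f (\<beta> ^ j)"
  proof
    assume "gr_red f (\<beta> ^ i) = gr_red f (\<beta> ^ j)"
    then have "f dvd - (\<beta> ^ i - \<beta> ^ j)"
      by (simp only: gr_red_eq_iff dvd_minus_iff)
    then have "f dvd \<beta> ^ i * (\<beta> ^ (j - i) - 1)"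
      using power_diff_factor[of i j \<beta>] \<open>i < j\<close> by simp
    then have "f dvd \<beta> ^ (j - i) - 1"
      by (rule f_dvd_cancel_beta_power)
    then have "gr_red f (\<beta> ^ (j - i)) = 1"
      by (simp add: gr_red_unique)
    then show False
      using order_beta \<open>i < j\<close> \<open>j \<in> {..<2 ^ m - 1}\<close> by (simp add: gr_has_order_def gr_pow_def)
  qed
qed

lemma gr_red_beta_power_nonzero: "gr_red f (\<beta> ^ k) \<noteq> 0"
proof
  assume "gr_red f (\<beta> ^ k) = 0"
  then have "f dvd \<beta> ^ k * 1" using gr_red(2)[of "\<beta> ^ k"] by simp
  then have "f dvd 1" by (rule f_dvd_cancel_beta_power)
  then show False using R_eq_iff[of 1 0] by simp
qed

lemma card_teich: "card T = 2 ^ m"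
proof -
  have "0 \<notin> (\<lambda>k. gr_red f (\<beta> ^ k)) ` {..<2 ^ m - 1}"
    using gr_red_beta_power_nonzero by auto
  then show ?thesis
    unfolding teich_eq using inj_on_beta_powers by (simp add: card_image)
qed

lemma inj_on_mu_teich: "inj_on mu T"
proof (rule inj_onI)
  fix X Y assume XY: "X \<in> T" "Y \<in> T" "mu X = mu Y"
  have "X ^ 2 ^ m = Y ^ 2 ^ m"
    using mu_eq_imp_power_eq[OF XY(3) F.m_pos] .
  then have "X - Y = (Y ^ 2 ^ m - Y) - (X ^ 2 ^ m - X)" by simp
  then have "f dvd X - Y"
    using teich_frobenius XY(1,2) by (metis dvd_diff)
  then show "X = Y" using R_eq_iff teich_in_R XY(1,2) by blast
qed

lemma bij_betw_mu_teich: "bij_betw mu T F.Fq"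
proof -
  have "mu ` T \<subseteq> F.Fq" using mu_in_Fq teich_in_R by blast
  moreover have "card (mu ` T) = card F.Fq"
    using card_image[OF inj_on_mu_teich] card_teich F.card_Fq by simp
  ultimately have "mu ` T = F.Fq"
    using card_subset_eq F.finite_Fq by blast
  then show ?thesis using inj_on_mu_teich by (simp add: bij_betw_def)
qed

section \<open>Two-adic coordinates\<close>

text \<open>For \<open>p = A + 2 B\<close> with \<open>A, B \<in> T\<close> we have \<open>p ^ 2 ^ m \<equiv> A\<close>, so \<open>nu p\<close> is the reduction of the
  second 2-adic digit \<open>B\<close>.\<close>

definition nu :: "z4 poly \<Rightarrow> z2 poly" where
  "nu p = mu (map_poly z4_half (p - gr_red f (p ^ 2 ^ m)))"

lemma mu_gr_red: "mu (gr_red f p) = mu p mod mu f"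
  using mu_dvd[OF gr_red(2)] F.mod_eq_Fq_iff mu_in_Fq gr_red(1) by (metis add.commute)

lemma mu_frobenius: "p \<in> R \<Longrightarrow> mu (gr_red f (p ^ 2 ^ m)) = mu p"
  using mu_gr_red F.mod_eq_Fq_iff[OF mu_in_Fq] F.fermat by (simp add: red2_poly.hom_power add.commute)

lemma nu_witness:
  assumes "p \<in> R"
  shows "f dvd p - p ^ 2 ^ m - 2 * map_poly z4_half (p - gr_red f (p ^ 2 ^ m))"
proof -
  have "mu (p - gr_red f (p ^ 2 ^ m)) = 0"
    using mu_frobenius[OF assms] by (simp add: red2_poly.hom_minus)
  then have "p - p ^ 2 ^ m - 2 * map_poly z4_half (p - gr_red f (p ^ 2 ^ m)) =
      - (p ^ 2 ^ m - gr_red f (p ^ 2 ^ m))"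
    by (simp add: double_half_poly)
  then show ?thesis using gr_red(2)[of "p ^ 2 ^ m"] by (simp only: dvd_minus_iff)
qed

lemma nu_in_Fq: "p \<in> R \<Longrightarrow> nu p \<in> F.Fq"
  unfolding nu_def
  by (meson mu_in_Fq diff_in_R gr_red(1) mem_R_iff degree_map_poly_le le_less_trans)

lemma nu_eqI:
  assumes "s \<in> R" "f dvd s - s ^ 2 ^ m - 2 * e"
  shows "nu s = mu e mod mu f"
proof -
  let ?h = "map_poly z4_half (s - gr_red f (s ^ 2 ^ m))"
  have "2 * (e - ?h) = (s - s ^ 2 ^ m - 2 * ?h) - (s - s ^ 2 ^ m - 2 * e)"
    by (simp add: algebra_simps)
  then have "f dvd 2 * (e - ?h)"
    using nu_witness[OF assms(1)] assms(2) by (metis dvd_diff)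
  then have "mu f dvd mu (e - ?h)"
    by (rule double_dvd_imp_mu_dvd)
  then have "mu f dvd mu e + nu s"
    by (simp add: nu_def red2_poly.hom_minus)
  then have "mu e mod mu f = nu s"
    by (subst F.mod_eq_Fq_iff[OF nu_in_Fq[OF assms(1)]]) (simp add: add.commute)
  then show ?thesis ..
qed

lemma R_eq_iff_mu_nu:
  assumes "a \<in> R" "b \<in> R"
  shows "a = b \<longleftrightarrow> mu a = mu b \<and> nu a = nu b"
proof
  assume "mu a = mu b \<and> nu a = nu b"
  then have mu: "mu a = mu b" and nu: "nu a = nu b" by auto
  have "a ^ 2 ^ m = b ^ 2 ^ m" by (rule mu_eq_imp_power_eq[OF mu F.m_pos])
  moreover have "mu (a - gr_red f (a ^ 2 ^ m)) = 0" "mu (b - gr_red f (b ^ 2 ^ m)) = 0"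
    using mu_frobenius assms by (simp_all add: red2_poly.hom_minus)
  ultimately have "a - gr_red f (a ^ 2 ^ m) = b - gr_red f (b ^ 2 ^ m)"
    using nu double_half_poly double_eq_double_iff unfolding nu_def by metis
  then show "a = b" using \<open>a ^ 2 ^ m = b ^ 2 ^ m\<close> by simp
qed simp

lemma nu_teich: "X \<in> T \<Longrightarrow> nu X = 0"
proof -
  assume X: "X \<in> T"
  then have "f dvd - (X ^ 2 ^ m - X)"
    using teich_frobenius by (simp only: dvd_minus_iff)
  then have "f dvd X - X ^ 2 ^ m - 2 * 0" by simp
  then have "nu X = mu 0 mod mu f" by (rule nu_eqI[OF teich_in_R[OF X]])
  then show "nu X = 0" by simp
qed

lemma nu_zero[simp]: "nu 0 = 0"
  by (rule nu_teich[OF zero_in_teich])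

text \<open>Addition of second digits, as for Witt vectors of length two.\<close>

lemma nu_add:
  assumes "a \<in> R" "b \<in> R"
  shows "nu (a + b) = ((mu a * mu b) ^ 2 ^ (m - 1) + (nu a + nu b)) mod mu f"
proof -
  define ha where "ha = map_poly z4_half (a - gr_red f (a ^ 2 ^ m))"
  define hb where "hb = map_poly z4_half (b - gr_red f (b ^ 2 ^ m))"
  have "(a + b) ^ 2 ^ m = a ^ 2 ^ m + b ^ 2 ^ m + 2 * (a * b) ^ 2 ^ (m - 1)"
    using power_two_pow_add[OF z4_poly_four, of a b "m - 1"] F.m_pos by simp
  then have "(a + b) - (a + b) ^ 2 ^ m - 2 * (ha + hb - (a * b) ^ 2 ^ (m - 1)) =
      (a - a ^ 2 ^ m - 2 * ha) + (b - b ^ 2 ^ m - 2 * hb)"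
    by (simp add: algebra_simps)
  then have "f dvd (a + b) - (a + b) ^ 2 ^ m - 2 * (ha + hb - (a * b) ^ 2 ^ (m - 1))"
    using nu_witness assms unfolding ha_def hb_def by (metis dvd_add)
  then have "nu (a + b) = mu (ha + hb - (a * b) ^ 2 ^ (m - 1)) mod mu f"
    by (rule nu_eqI[OF add_in_R[OF assms]])
  then show ?thesis
    by (simp add: nu_def ha_def hb_def red2_poly.hom_add red2_poly.hom_minus red2_poly.hom_mult
        red2_poly.hom_power add.commute add.left_commute)
qed

lemma nu_uminus:
  assumes "a \<in> R"
  shows "nu (- a) = (nu a + mu a) mod mu f"
proof -
  define ha where "ha = map_poly z4_half (a - gr_red f (a ^ 2 ^ m))"
  have "(- a) ^ 2 ^ m = a ^ 2 ^ m"
    using F.m_pos by (simp add: power_minus_even)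
  then have "(- a) - (- a) ^ 2 ^ m - 2 * (- ha - a ^ 2 ^ m) = - (a - a ^ 2 ^ m - 2 * ha)"
    by (simp add: algebra_simps)
  then have "f dvd (- a) - (- a) ^ 2 ^ m - 2 * (- ha - a ^ 2 ^ m)"
    using nu_witness[OF assms] unfolding ha_def by (simp only: dvd_minus_iff)
  then have "nu (- a) = mu (- ha - a ^ 2 ^ m) mod mu f"
    by (rule nu_eqI[OF uminus_in_R[OF assms]])
  also have "\<dots> = (nu a + mu a) mod mu f"
    using F.fermat[of "mu a"]
    by (simp add: nu_def ha_def red2_poly.hom_minus red2_poly.hom_power F.mod_eq_iff algebra_simps)
  finally show ?thesis .
qed

lemma nu_uminus_teich: "X \<in> T \<Longrightarrow> nu (- X) = mu X"
  using nu_uminus teich_in_R nu_teich F.Fq_mod mu_in_Fq by simp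

lemma nu_sum4:
  assumes "a \<in> R" "b \<in> R" "c \<in> R" "d \<in> R"
  shows "nu (a + b + c + d) =
    (esym2 (mu a) (mu b) (mu c) (mu d) ^ 2 ^ (m - 1) + (nu a + nu b + nu c + nu d)) mod mu f"
proof -
  let ?h = "2 ^ (m - 1) :: nat"
  have "nu (a + b + c + d) = nu ((a + b) + (c + d))"
    by (simp add: add.assoc)
  also have "\<dots> = (((mu a + mu b) * (mu c + mu d)) ^ ?h
      + (((mu a * mu b) ^ ?h + (nu a + nu b)) mod mu f + ((mu c * mu d) ^ ?h + (nu c + nu d)) mod mu f)) mod mu f"
    using assms by (simp add: nu_add red2_poly.hom_add)
  also have "\<dots> = (((mu a + mu b) * (mu c + mu d)) ^ ?h
      + (((mu a * mu b) ^ ?h + (nu a + nu b)) + ((mu c * mu d) ^ ?h + (nu c + nu d)))) mod mu f"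
    by (rule mod_add_mods)
  also have "\<dots> = ((mu a * mu b) ^ ?h + (mu c * mu d) ^ ?h + ((mu a + mu b) * (mu c + mu d)) ^ ?h
      + (nu a + nu b + nu c + nu d)) mod mu f"
    by (simp add: add_ac)
  also have "(mu a * mu b) ^ ?h + (mu c * mu d) ^ ?h + ((mu a + mu b) * (mu c + mu d)) ^ ?h =
      esym2 (mu a) (mu b) (mu c) (mu d) ^ ?h"
    by (simp add: esym2_pairs z2_poly_frobenius)
  finally show ?thesis .
qed

lemma sum4_eq_iff:
  assumes "a1 \<in> R" "a2 \<in> R" "a3 \<in> R" "a4 \<in> R" "a \<in> R"
  shows "a1 + a2 + a3 + a4 = a \<longleftrightarrow> mu a1 + mu a2 + mu a3 + mu a4 = mu a \<and>
    mu f dvd esym2 (mu a1) (mu a2) (mu a3) (mu a4) + (nu a1 + nu a2 + nu a3 + nu a4)\<^sup>2 + (nu a)\<^sup>2"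
  using R_eq_iff_mu_nu[of "a1 + a2 + a3 + a4" a] nu_sum4[of a1 a2 a3 a4]
    F.sqrt_mod_eq_iff[OF nu_in_Fq[OF assms(5)]] assms
  by (simp add: red2_poly.hom_add)

lemma twoR_eq: "twoR f = {a \<in> R. mu a = 0}"
proof
  show "twoR f \<subseteq> {a \<in> R. mu a = 0}"
    unfolding twoR_def using gr_red_id by auto
  show "{a \<in> R. mu a = 0} \<subseteq> twoR f"
  proof clarify
    fix a assume a: "a \<in> R" "mu a = 0"
    have "map_poly z4_half a \<in> R"
      using a(1) mem_R_iff degree_map_poly_le le_less_trans by blast
    moreover have "a = gr_red f (2 * map_poly z4_half a)"
      using a gr_red_id double_half_poly by simp
    ultimately show "a \<in> twoR f" unfolding twoR_def by blast
  qed
qed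

lemma nu_eq_0_iff: "a \<in> R \<Longrightarrow> mu a = 0 \<Longrightarrow> nu a = 0 \<longleftrightarrow> a = 0"
  using R_eq_iff_mu_nu[of a 0] by auto

lemma mem_teich_sums_iff:
  assumes "a \<in> R"
  shows "a \<in> {x + y | x y. x \<in> T \<and> y \<in> T} \<longleftrightarrow> (\<exists>z\<in>F.Fq. mu f dvd z\<^sup>2 + mu a * z + (nu a)\<^sup>2)"
proof -
  have sum2: "X + Y = a \<longleftrightarrow> mu X + mu Y = mu a \<and> mu f dvd mu X * mu Y + (nu a)\<^sup>2"
    if "X \<in> T" "Y \<in> T" for X Y
    using sum4_eq_iff[of X Y 0 0 a] that assms teich_in_R nu_teich by (simp add: esym2_def)
  have surj: "mu ` T = F.Fq"
    using bij_betw_mu_teich by (simp add: bij_betw_def)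
  show ?thesis
  proof
    assume "a \<in> {x + y | x y. x \<in> T \<and> y \<in> T}"
    then obtain X Y where XY: "X \<in> T" "Y \<in> T" "X + Y = a" by blast
    then have sum: "mu X + mu Y = mu a" and "mu f dvd mu X * mu Y + (nu a)\<^sup>2"
      using sum2 by auto
    moreover have "mu X * mu Y = (mu X)\<^sup>2 + mu a * mu X"
      unfolding sum[symmetric] by (simp add: algebra_simps power2_eq_square)
    ultimately have "mu f dvd (mu X)\<^sup>2 + mu a * mu X + (nu a)\<^sup>2"
      by simp
    then show "\<exists>z\<in>F.Fq. mu f dvd z\<^sup>2 + mu a * z + (nu a)\<^sup>2"
      using mu_in_Fq[OF teich_in_R[OF XY(1)]] by (rule bexI)
  next
    assume "\<exists>z\<in>F.Fq. mu f dvd z\<^sup>2 + mu a * z + (nu a)\<^sup>2"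
    then obtain z where z: "z \<in> F.Fq" "mu f dvd z\<^sup>2 + mu a * z + (nu a)\<^sup>2" by blast
    have "z \<in> mu ` T" "mu a + z \<in> mu ` T"
      using surj z(1) mu_in_Fq[OF assms] by simp_all
    then obtain X Y where X: "z = mu X" "X \<in> T" and Y: "mu a + z = mu Y" "Y \<in> T"
      by (elim imageE)
    have "mu X * mu Y = z\<^sup>2 + mu a * z"
      unfolding X(1)[symmetric] Y(1)[symmetric] by (simp add: algebra_simps power2_eq_square)
    moreover have "mu X + mu Y = mu a"
      unfolding X(1)[symmetric] Y(1)[symmetric] by (simp add: add.left_commute)
    ultimately have "X + Y = a"
      using sum2[OF X(2) Y(2)] X(1) z(2) by simp
    then show "a \<in> {x + y | x y. x \<in> T \<and> y \<in> T}"
      using X(2) Y(2) by blast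
  qed
qed

lemma teich_sums_subset_R: "{x + y | x y. x \<in> T \<and> y \<in> T} \<subseteq> R"
  using teich_in_R by auto

lemma twoR_subset_teich_sums: "twoR f \<subseteq> {x + y | x y. x \<in> T \<and> y \<in> T}"
proof
  fix a assume "a \<in> twoR f"
  then have a: "a \<in> R" "mu a = 0" by (simp_all add: twoR_eq)
  have "mu f dvd (nu a)\<^sup>2 + mu a * nu a + (nu a)\<^sup>2"
    using a(2) by simp
  then show "a \<in> {x + y | x y. x \<in> T \<and> y \<in> T}"
    using mem_teich_sums_iff[OF a(1)] nu_in_Fq[OF a(1)] by blast
qed

section \<open>Counting the quadruples\<close>

lemma card_fibre_sum4:
  assumes "odd m"
  shows "card {(X, Y, Z, W). X \<in> T \<and> Y \<in> T \<and> Z \<in> T \<and> W \<in> T \<and> X + Y + Z + W = 0} = 2 ^ m"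
    and "a \<in> twoR f - {0} \<Longrightarrow>
      card {(X, Y, Z, W). X \<in> T \<and> Y \<in> T \<and> Z \<in> T \<and> W \<in> T \<and> X + Y + Z + W = a} = 2 ^ m * (2 ^ m + 1)"
    and "a \<in> gr_carrier f - twoR f \<Longrightarrow> card {(X, Y, Z, W). X \<in> T \<and> Y \<in> T \<and> Z \<in> T \<and> W \<in> T \<and> X + Y + Z + W = a} = 2 ^ (2 * m)"
proof -
  have count: "card {(X, Y, Z, W). X \<in> T \<and> Y \<in> T \<and> Z \<in> T \<and> W \<in> T \<and> X + Y + Z + W = a} = 
      (if mu a = 0 then if nu a = 0 then 2 ^ m else 2 ^ m * (2 ^ m + 1) else 2 ^ (2 * m))"
    if a: "a \<in> R" for a
  proof -
    have "card {(X, Y, Z, W). X \<in> T \<and> Y \<in> T \<and> Z \<in> T \<and> W \<in> T \<and> X + Y + Z + W = a} = 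
        card (F.sum_quadruples (mu a) (\<lambda>x y z w. mu f dvd esym2 x y z w + (nu a)\<^sup>2))"
      unfolding F.sum_quadruples_def
      by (rule card_quadruples_bij_betw[OF bij_betw_mu_teich]) (simp add: sum4_eq_iff teich_in_R nu_teich a)
    also have "\<dots> = (if mu a = 0 then if mu f dvd (nu a)\<^sup>2 then 2 ^ m else 2 ^ m * (2 ^ m + 1) else (2 ^ m)\<^sup>2)"
      by (rule F.card_sum_quadruples_esym2[OF assms mu_in_Fq[OF a]])
    finally show ?thesis
      using F.g_dvd_square_iff F.Fq_eq_0_iff[OF nu_in_Fq[OF a]] by (simp add: power_mult mult.commute)
  qed
  show "card {(X, Y, Z, W). X \<in> T \<and> Y \<in> T \<and> Z \<in> T \<and> W \<in> T \<and> X + Y + Z + W = 0} = 2 ^ m"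
    using count[OF zero_in_R] by simp
  show "card {(X, Y, Z, W). X \<in> T \<and> Y \<in> T \<and> Z \<in> T \<and> W \<in> T \<and> X + Y + Z + W = a} = 2 ^ m * (2 ^ m + 1)" if "a \<in> twoR f - {0}"
    using count[of a] nu_eq_0_iff[of a] that by (simp add: twoR_eq)
  show "card {(X, Y, Z, W). X \<in> T \<and> Y \<in> T \<and> Z \<in> T \<and> W \<in> T \<and> X + Y + Z + W = a} = 2 ^ (2 * m)" if "a \<in> gr_carrier f - twoR f"
    using count[of a] that by (simp add: twoR_eq)
qed

lemma card_fibre_sum2_diff2:
  shows "card {(X, Y, Z, W). X \<in> T \<and> Y \<in> T \<and> Z \<in> T \<and> W \<in> T \<and> X + Y - Z - W = 0} = (2 ^ (m + 1) - 1) * 2 ^ m"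
    and "a \<in> twoR f - {0} \<Longrightarrow>
      card {(X, Y, Z, W). X \<in> T \<and> Y \<in> T \<and> Z \<in> T \<and> W \<in> T \<and> X + Y - Z - W = a} = (2 ^ m - 1) * 2 ^ m"
    and "a \<in> gr_carrier f - twoR f \<Longrightarrow> card {(X, Y, Z, W). X \<in> T \<and> Y \<in> T \<and> Z \<in> T \<and> W \<in> T \<and> X + Y - Z - W = a} = 2 ^ (2 * m)"
proof -
  have count: "card {(X, Y, Z, W). X \<in> T \<and> Y \<in> T \<and> Z \<in> T \<and> W \<in> T \<and> X + Y - Z - W = a} = 
      (if mu a = 0 then if nu a = 0 then (2 ^ (m + 1) - 1) * 2 ^ m else (2 ^ m - 1) * 2 ^ m
       else 2 ^ (2 * m))"
    if a: "a \<in> R" for a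
  proof -
    have "card {(X, Y, Z, W). X \<in> T \<and> Y \<in> T \<and> Z \<in> T \<and> W \<in> T \<and> X + Y - Z - W = a} = 
        card (F.sum_quadruples (mu a) (\<lambda>x y z w. mu f dvd esym2 x y z w + z\<^sup>2 + w\<^sup>2 + (nu a)\<^sup>2))"
      unfolding F.sum_quadruples_def
    proof (rule card_quadruples_bij_betw[OF bij_betw_mu_teich])
      fix X Y Z W assume "X \<in> T" "Y \<in> T" "Z \<in> T" "W \<in> T"
      then show "X + Y - Z - W = a \<longleftrightarrow> mu X + mu Y + mu Z + mu W = mu a \<and>
          mu f dvd esym2 (mu X) (mu Y) (mu Z) (mu W) + (mu Z)\<^sup>2 + (mu W)\<^sup>2 + (nu a)\<^sup>2"
        using sum4_eq_iff[of X Y "- Z" "- W" a] a teich_in_R nu_teich nu_uminus_teich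
        by (simp add: z2_poly_square_add add.assoc)
    qed
    also have "\<dots> = (if mu a = 0 then if mu f dvd (nu a)\<^sup>2 then 2 ^ m * (2 * 2 ^ m - 1)
        else 2 ^ m * (2 ^ m - 1) else (2 ^ m)\<^sup>2)"
      by (rule F.card_sum_quadruples_esym2_zw[OF mu_in_Fq[OF a]])
    finally show ?thesis
      using F.g_dvd_square_iff F.Fq_eq_0_iff[OF nu_in_Fq[OF a]] by (simp add: power_mult mult.commute)
  qed
  show "card {(X, Y, Z, W). X \<in> T \<and> Y \<in> T \<and> Z \<in> T \<and> W \<in> T \<and> X + Y - Z - W = 0} = (2 ^ (m + 1) - 1) * 2 ^ m"
    using count[OF zero_in_R] by simp
  show "card {(X, Y, Z, W). X \<in> T \<and> Y \<in> T \<and> Z \<in> T \<and> W \<in> T \<and> X + Y - Z - W = a} = (2 ^ m - 1) * 2 ^ m" if "a \<in> twoR f - {0}"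
    using count[of a] nu_eq_0_iff[of a] that by (simp add: twoR_eq)
  show "card {(X, Y, Z, W). X \<in> T \<and> Y \<in> T \<and> Z \<in> T \<and> W \<in> T \<and> X + Y - Z - W = a} = 2 ^ (2 * m)" if "a \<in> gr_carrier f - twoR f"
    using count[of a] that by (simp add: twoR_eq)
qed

lemma card_fibre_sum3_diff1:
  shows "a \<in> twoR f \<Longrightarrow> card {(X, Y, Z, W). X \<in> T \<and> Y \<in> T \<and> Z \<in> T \<and> W \<in> T \<and> X + Y + Z - W = a} = 2 ^ (2 * m)"
    and "a \<in> {x + y | x y. x \<in> T \<and> y \<in> T} - twoR f \<Longrightarrow>
      card {(X, Y, Z, W). X \<in> T \<and> Y \<in> T \<and> Z \<in> T \<and> W \<in> T \<and> X + Y + Z - W = a} = (2 ^ m + 1) * 2 ^ m"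
    and "a \<in> gr_carrier f - {x + y | x y. x \<in> T \<and> y \<in> T} \<Longrightarrow>
      card {(X, Y, Z, W). X \<in> T \<and> Y \<in> T \<and> Z \<in> T \<and> W \<in> T \<and> X + Y + Z - W = a} = (2 ^ m - 1) * 2 ^ m"
proof -
  have count: "card {(X, Y, Z, W). X \<in> T \<and> Y \<in> T \<and> Z \<in> T \<and> W \<in> T \<and> X + Y + Z - W = a} = 
      (if mu a = 0 then 2 ^ (2 * m)
       else if \<exists>z\<in>F.Fq. mu f dvd z\<^sup>2 + mu a * z + (nu a)\<^sup>2 then (2 ^ m + 1) * 2 ^ m
       else (2 ^ m - 1) * 2 ^ m)"
    if a: "a \<in> R" for a
  proof -
    have "card {(X, Y, Z, W). X \<in> T \<and> Y \<in> T \<and> Z \<in> T \<and> W \<in> T \<and> X + Y + Z - W = a} = 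
        card (F.sum_quadruples (mu a) (\<lambda>x y z w. mu f dvd esym2 x y z w + w\<^sup>2 + (nu a)\<^sup>2))"
      unfolding F.sum_quadruples_def
    proof (rule card_quadruples_bij_betw[OF bij_betw_mu_teich])
      fix X Y Z W assume "X \<in> T" "Y \<in> T" "Z \<in> T" "W \<in> T"
      then show "X + Y + Z - W = a \<longleftrightarrow> mu X + mu Y + mu Z + mu W = mu a \<and>
          mu f dvd esym2 (mu X) (mu Y) (mu Z) (mu W) + (mu W)\<^sup>2 + (nu a)\<^sup>2"
        using sum4_eq_iff[of X Y Z "- W" a] a teich_in_R nu_teich nu_uminus_teich
        by (simp add: add.assoc)
    qed
    also have "\<dots> = (if mu a = 0 then (2 ^ m)\<^sup>2
        else if \<exists>z\<in>F.Fq. mu f dvd z\<^sup>2 + mu a * z + (nu a)\<^sup>2 then 2 ^ m * (2 ^ m + 1)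
        else 2 ^ m * (2 ^ m - 1))"
      by (rule F.card_sum_quadruples_esym2_w[OF mu_in_Fq[OF a]])
    finally show ?thesis by (simp add: power_mult mult.commute)
  qed
  show "card {(X, Y, Z, W). X \<in> T \<and> Y \<in> T \<and> Z \<in> T \<and> W \<in> T \<and> X + Y + Z - W = a} = 2 ^ (2 * m)" if "a \<in> twoR f"
    using count[of a] that by (simp add: twoR_eq)
  show "card {(X, Y, Z, W). X \<in> T \<and> Y \<in> T \<and> Z \<in> T \<and> W \<in> T \<and> X + Y + Z - W = a} = (2 ^ m + 1) * 2 ^ m" if "a \<in> {x + y | x y. x \<in> T \<and> y \<in> T} - twoR f"
    using count[of a] that mem_teich_sums_iff[of a] subsetD[OF teich_sums_subset_R, of a] by (simp add: twoR_eq)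
  show "card {(X, Y, Z, W). X \<in> T \<and> Y \<in> T \<and> Z \<in> T \<and> W \<in> T \<and> X + Y + Z - W = a} = (2 ^ m - 1) * 2 ^ m" if "a \<in> gr_carrier f - {x + y | x y. x \<in> T \<and> y \<in> T}"
  proof -
    have "a \<in> R" "a \<notin> twoR f" using that twoR_subset_teich_sums by blast+
    then have "mu a \<noteq> 0" by (simp add: twoR_eq)
    moreover have "\<not> (\<exists>z\<in>F.Fq. mu f dvd z\<^sup>2 + mu a * z + (nu a)\<^sup>2)"
      using that mem_teich_sums_iff[OF \<open>a \<in> R\<close>] by blast
    ultimately show ?thesis by (simp only: count[OF \<open>a \<in> R\<close>] if_False)
  qed
qed

end

theorem corollaryB4:
  fixes f \<beta> :: "z4 poly" and m :: nat
  assumes "lead_coeff f = 1" and "degree f = m"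
    and "irreducible (map_poly red2 f)"
    and "odd m"
    and "gr_has_order f \<beta> (2 ^ m - 1)"
  defines "T \<equiv> teich f \<beta>"
  defines "TT \<equiv> {x + y | x y. x \<in> T \<and> y \<in> T}"
  shows
   "(card {(X,Y,Z,W). X \<in> T \<and> Y \<in> T \<and> Z \<in> T \<and> W \<in> T \<and> X + Y + Z + W = 0} = 2 ^ m) \<and>
    (\<forall>a \<in> twoR f - {0}. card {(X,Y,Z,W). X \<in> T \<and> Y \<in> T \<and> Z \<in> T \<and> W \<in> T \<and> X + Y + Z + W = a}
        = 2 ^ m * (2 ^ m + 1)) \<and>
    (\<forall>a \<in> gr_carrier f - twoR f. card {(X,Y,Z,W). X \<in> T \<and> Y \<in> T \<and> Z \<in> T \<and> W \<in> T \<and> X + Y + Z + W = a}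
        = 2 ^ (2 * m)) \<and>
    (card {(X,Y,Z,W). X \<in> T \<and> Y \<in> T \<and> Z \<in> T \<and> W \<in> T \<and> X + Y - Z - W = 0} = (2 ^ (m + 1) - 1) * 2 ^ m) \<and>
    (\<forall>a \<in> twoR f - {0}. card {(X,Y,Z,W). X \<in> T \<and> Y \<in> T \<and> Z \<in> T \<and> W \<in> T \<and> X + Y - Z - W = a}
        = (2 ^ m - 1) * 2 ^ m) \<and>
    (\<forall>a \<in> gr_carrier f - twoR f. card {(X,Y,Z,W). X \<in> T \<and> Y \<in> T \<and> Z \<in> T \<and> W \<in> T \<and> X + Y - Z - W = a}
        = 2 ^ (2 * m)) \<and>
    (\<forall>a \<in> twoR f. card {(X,Y,Z,W). X \<in> T \<and> Y \<in> T \<and> Z \<in> T \<and> W \<in> T \<and> X + Y + Z - W = a}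
        = 2 ^ (2 * m)) \<and>
    (\<forall>a \<in> TT - twoR f. card {(X,Y,Z,W). X \<in> T \<and> Y \<in> T \<and> Z \<in> T \<and> W \<in> T \<and> X + Y + Z - W = a}
        = (2 ^ m + 1) * 2 ^ m) \<and>
    (\<forall>a \<in> gr_carrier f - TT. card {(X,Y,Z,W). X \<in> T \<and> Y \<in> T \<and> Z \<in> T \<and> W \<in> T \<and> X + Y + Z - W = a}
        = (2 ^ m - 1) * 2 ^ m)"
  proof -
  interpret teichmueller f \<beta> m
    using assms(1-5) by unfold_locales (auto simp: odd_pos)
  show ?thesis
    unfolding TT_def T_def
    by (intro conjI ballI;
        rule card_fibre_sum4[OF assms(4)] card_fibre_sum2_diff2 card_fibre_sum3_diff1; assumption)
qed

end
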